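(* Let $A\in\mathbb{R}^{n\times m}$, $B\in\mathbb{R}_+^{n\times k}$ and $C\in\mathbb{R}_+^{k\times m}$ be such that $B\boxtimes C$ is dominated by $A$, i.e. $(B\boxtimes C)_{ij}\le A_{ij}$ for all $i\in[n]$, $j\in[m]$. Then $s(B)+s(C)\ge s(A)$.
   Context: $\mathbb{R}_+=[0,\infty)$ and $[n]=\{1,\dots,n\}$. The max-times product is $(B\boxtimes C)_{ij}=\max_{s=1}^{k} B_{is}C_{sj}$. For a $p\times q$ matrix $X$, its sparsity is $s(X)=\frac{pq-\mathrm{nnz}(X)}{pq}$, where $\mathrm{nnz}(X)$ is the number of nonzero entries of $X$. *)

theory Defs
  imports "HOL-Analysis.Analysis"
begin

definition maxtimes :: "real^'k^'p \<Rightarrow> real^'q^'k \<Rightarrow> real^'q^'p" where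
  "maxtimes B C = (\<chi> i j. Max ((\<lambda>s. B $ i $ s * C $ s $ j) ` UNIV))"

definition nnz :: "real^'q^'p \<Rightarrow> nat" where
  "nnz X = card {(i, j). X $ i $ j \<noteq> 0}"

definition sparsity :: "real^'q^'p \<Rightarrow> real" where
  "sparsity X = (real (CARD('p) * CARD('q)) - real (nnz X)) / real (CARD('p) * CARD('q))"

end

theory Submission
  imports Defs
begin

text \<open>Fix an inner index s. Since all products B_is C_sj are nonnegative and bounded by
  A_ij, a zero entry A_ij forces B_is = 0 or C_sj = 0; hence the zeros of A are covered by
  (zero rows of column s of B) \<times> [m] together with [n] \<times> (zero columns of row s of C).
  Summing these bounds over all s gives k z(A) \<le> m z(B) + n z(C) for the numbers z of zero
  entries, which is the claim after division by nmk.\<close>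

definition nzeros :: "real^'q^'p \<Rightarrow> nat" where
  "nzeros X = card {(i, j). X $ i $ j = 0}"

lemma nnz_plus_nzeros:
  fixes X :: "real^'q^'p"
  shows "nnz X + nzeros X = CARD('p) * CARD('q)"
proof -
  have "nnz X + nzeros X = card ({(i, j). X $ i $ j \<noteq> 0} \<union> {(i, j). X $ i $ j = 0})"
    unfolding nnz_def nzeros_def by (rule card_Un_disjoint[symmetric]) auto
  also have "{(i, j). X $ i $ j \<noteq> 0} \<union> {(i, j). X $ i $ j = 0} = (UNIV :: 'p set) \<times> (UNIV :: 'q set)"
    by auto
  finally show ?thesis by (simp add: card_cartesian_product)
qed

lemma sparsity_eq_nzeros:
  fixes X :: "real^'q^'p"
  shows "sparsity X = real (nzeros X) / real (CARD('p) * CARD('q))"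
  unfolding sparsity_def using nnz_plus_nzeros[of X]
  by (metis add_diff_cancel_left' of_nat_add)

lemma nzeros_by_rows:
  fixes X :: "real^'q^'p"
  shows "nzeros X = (\<Sum>i\<in>UNIV. card {j. X $ i $ j = 0})"
proof -
  have "{(i, j). X $ i $ j = 0} = Sigma UNIV (\<lambda>i. {j. X $ i $ j = 0})" by auto
  then show ?thesis unfolding nzeros_def by simp
qed

lemma nzeros_by_columns:
  fixes X :: "real^'q^'p"
  shows "nzeros X = (\<Sum>j\<in>UNIV. card {i. X $ i $ j = 0})"
proof -
  have "{(i, j). X $ i $ j = 0} = prod.swap ` Sigma UNIV (\<lambda>j. {i. X $ i $ j = 0})" by force
  then have "nzeros X = card (Sigma UNIV (\<lambda>j. {i. X $ i $ j = 0}))"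
    unfolding nzeros_def by (simp add: card_image)
  then show ?thesis by simp
qed

lemma maxtimes_ge:
  fixes B :: "real^'k^'p" and C :: "real^'q^'k"
  shows "B $ i $ s * C $ s $ j \<le> maxtimes B C $ i $ j"
  unfolding maxtimes_def by (simp add: Max_ge)

lemma dominated_zero_imp_factor_zero:
  fixes A :: "real^'q^'p" and B :: "real^'k^'p" and C :: "real^'q^'k"
  assumes "B $ i $ s \<ge> 0" and "C $ s $ j \<ge> 0"
    and "maxtimes B C $ i $ j \<le> A $ i $ j" and "A $ i $ j = 0"
  shows "B $ i $ s = 0 \<or> C $ s $ j = 0"
proof -
  have "B $ i $ s * C $ s $ j \<le> 0"
    using maxtimes_ge[of B i s C j] assms(3,4) by linarith
  with assms(1,2) have "B $ i $ s * C $ s $ j = 0"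
    by (meson mult_nonneg_nonneg order_antisym)
  then show ?thesis by simp
qed

lemma nzeros_dominated_le_slice:
  fixes A :: "real^'m^'n" and B :: "real^'k^'n" and C :: "real^'m^'k"
  assumes B_nonneg: "\<And>i s. B $ i $ s \<ge> 0"
    and C_nonneg: "\<And>s j. C $ s $ j \<ge> 0"
    and dom: "\<And>i j. maxtimes B C $ i $ j \<le> A $ i $ j"
  shows "nzeros A \<le> card {i. B $ i $ s = 0} * CARD('m) + CARD('n) * card {j. C $ s $ j = 0}"
proof -
  let ?ZB = "{i. B $ i $ s = 0} \<times> (UNIV :: 'm set)"
  let ?ZC = "(UNIV :: 'n set) \<times> {j. C $ s $ j = 0}"
  have "{(i, j). A $ i $ j = 0} \<subseteq> ?ZB \<union> ?ZC"
    using dominated_zero_imp_factor_zero[OF B_nonneg C_nonneg dom] by blast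
  then have "nzeros A \<le> card (?ZB \<union> ?ZC)"
    unfolding nzeros_def by (simp add: card_mono)
  also have "\<dots> \<le> card ?ZB + card ?ZC" by (rule card_Un_le)
  finally show ?thesis by (simp add: card_cartesian_product)
qed

lemma nzeros_dominated_le:
  fixes A :: "real^'m^'n" and B :: "real^'k^'n" and C :: "real^'m^'k"
  assumes "\<And>i s. B $ i $ s \<ge> 0" and "\<And>s j. C $ s $ j \<ge> 0"
    and "\<And>i j. maxtimes B C $ i $ j \<le> A $ i $ j"
  shows "CARD('k) * nzeros A \<le> nzeros B * CARD('m) + CARD('n) * nzeros C"
proof -
  have "CARD('k) * nzeros A = (\<Sum>s\<in>(UNIV :: 'k set). nzeros A)" by simp
  also have "\<dots> \<le> (\<Sum>s\<in>UNIV. card {i. B $ i $ s = 0} * CARD('m) + CARD('n) * card {j. C $ s $ j = 0})"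
    by (rule sum_mono) (rule nzeros_dominated_le_slice[OF assms])
  also have "\<dots> = nzeros B * CARD('m) + CARD('n) * nzeros C"
    unfolding nzeros_by_columns[of B] nzeros_by_rows[of C]
    by (simp add: sum.distrib sum_distrib_left sum_distrib_right)
  finally show ?thesis .
qed

theorem theorem3:
  fixes A :: "real^'m^'n" and B :: "real^'k^'n" and C :: "real^'m^'k"
  assumes B_nonneg: "\<And>i s. B $ i $ s \<ge> 0"
    and C_nonneg: "\<And>s j. C $ s $ j \<ge> 0"
    and dom: "\<And>i j. maxtimes B C $ i $ j \<le> A $ i $ j"
  shows "sparsity B + sparsity C \<ge> sparsity A"
proof -
  have "real CARD('k) * real (nzeros A)
      \<le> real (nzeros B) * real CARD('m) + real CARD('n) * real (nzeros C)"
    using nzeros_dominated_le[OF B_nonneg C_nonneg dom] by (metis of_nat_add of_nat_le_iff of_nat_mult)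
  moreover have "real CARD('n) > 0" "real CARD('m) > 0" "real CARD('k) > 0" by auto
  ultimately show ?thesis
    unfolding sparsity_eq_nzeros by (simp add: field_simps)
qed

end
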